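(* Let $h,k$ be integers with $k>0$, $\gcd(h,k)=1$ and $h+k$ odd. Then $$B_{1}(h,k)=(1-h)\bigl(4s(h,2k)+4s(2h,k)-10s(h,k)\bigr).$$
   Context: $[x]$ denotes the greatest integer $\le x$, and $((x))=x-[x]-\tfrac12$ if $x\notin\mathbb{Z}$, $((x))=0$ if $x\in\mathbb{Z}$. For integers $a,b$ with $b>0$: the Dedekind sum is $s(a,b)=\sum_{j=1}^{b-1}\left(\left(\frac{aj}{b}\right)\right)\left(\left(\frac{j}{b}\right)\right)$, and (for $\gcd(a,b)=1$) $$B_{1}(a,b)=\sum_{j=1}^{b-1}(-1)^{j+\left[\frac{aj}{b}\right]}\left[\frac{aj}{b}\right].$$ *)

theory Defs
  imports Complex_Main
begin

definition saw :: "real \<Rightarrow> real" where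
  "saw x = (if x \<in> \<int> then 0 else x - of_int \<lfloor>x\<rfloor> - 1/2)"

definition dedekind_sum :: "int \<Rightarrow> int \<Rightarrow> real" where
  "dedekind_sum a b =
     (\<Sum>j\<in>{1..b-1}. saw (of_int (a*j) / of_int b) * saw (of_int j / of_int b))"

definition B1 :: "int \<Rightarrow> int \<Rightarrow> int" where
  "B1 a b =
     (\<Sum>j\<in>{1..b-1}. let e = \<lfloor>of_int (a*j) / (of_int b :: real)\<rfloor>
                    in (if even (j + e) then 1 else -1) * e)"

end

theory Submission
  imports Defs
begin

text \<open>Write \<open>e(j) = [hj/k]\<close>. Since \<open>k\<close> does not divide \<open>hj\<close>, the reflection \<open>j \<mapsto> k - j\<close>
  turns \<open>e(j)\<close> into \<open>h - 1 - e(j)\<close>, and because \<open>h + k\<close> is odd it preserves the sign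
  \<open>(-1)^(j + e(j)) = (-1)^[(h+k)j/k]\<close>; hence \<open>2 B\<^sub>1(h,k) = (h - 1) \<Sum>\<^sub>j (-1)^[(h+k)j/k]\<close>.
  For non-integral \<open>x\<close> one has \<open>(-1)^[x] = 2((x)) - 4((x/2))\<close>, and \<open>((aj/k))\<close> sums to zero over
  \<open>j\<close>, so the sign sum equals \<open>-4 \<Sum>\<^sub>j (((h+k)j/2k))\<close>. The duplication formula
  \<open>((x)) + ((x + 1/2)) = ((2x))\<close> expresses this sum through \<open>s(h+k,k) = s(h,k)\<close> and
  \<open>s(h+k,2k)\<close>, and the latter through \<open>s(h,2k)\<close>, \<open>s(2h,k)\<close> and \<open>s(h,k)\<close>.\<close>

lemma saw_conv_frac: "saw x = (if x \<in> \<int> then 0 else frac x - 1/2)"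
  by (simp add: saw_def frac_def)

lemma saw_Ints: "x \<in> \<int> \<Longrightarrow> saw x = 0"
  by (simp add: saw_def)

lemma saw_eq:
  assumes "of_int m < x" "x < of_int m + 1"
  shows "saw x = x - of_int m - 1/2"
proof -
  have "frac x = x - of_int m"
    using assms by (simp add: frac_unique_iff)
  moreover from this have "x \<notin> \<int>"
    using assms by (simp flip: frac_gt_0_iff)
  ultimately show ?thesis
    by (simp add: saw_conv_frac)
qed

lemma saw_add_of_int: "saw (x + of_int m) = saw x"
  by (simp add: saw_def)

lemma saw_add_of_nat: "saw (x + of_nat m) = saw x"
  using saw_add_of_int[of x "int m"] by simp

lemma saw_minus: "saw (- x) = - saw x"
  by (simp add: saw_conv_frac frac_neg)

lemma saw_of_int_add_half: "saw (of_int m + 1/2) = 0"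
  by (subst saw_eq[of m]) auto

lemma saw_add_saw_add_half: "saw x + saw (x + 1/2) = saw (2 * x)"
proof -
  define p where "p = \<lfloor>x\<rfloor>"
  have "of_int p \<le> x" "x < of_int p + 1"
    unfolding p_def by linarith+
  then consider "x = of_int p" | "of_int p < x" "x < of_int p + 1/2" | "x = of_int p + 1/2"
    | "of_int p + 1/2 < x" "x < of_int p + 1"
    by linarith
  then show ?thesis
  proof cases
    case 1
    then show ?thesis by (simp add: saw_Ints saw_of_int_add_half)
  next
    case 2
    then show ?thesis by (simp add: saw_eq[of p x] saw_eq[of p "x + 1/2"] saw_eq[of "2*p" "2*x"])
  next
    case 3
    then show ?thesis
      by (simp add: saw_Ints saw_of_int_add_half distrib_left)
  next
    case 4
    then show ?thesis
      by (simp add: saw_eq[of p x] saw_eq[of "p+1" "x + 1/2"] saw_eq[of "2*p+1" "2*x"])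
  qed
qed

lemma saw_add_half_of_nat:
  "saw x + saw (x + of_nat j / 2) = (if even j then 2 * saw x else saw (2 * x))"
proof (cases "even j")
  case True
  then obtain i where "j = 2 * i" by blast
  then have "x + of_nat j / 2 = x + of_nat i" by simp
  with True show ?thesis by (simp only: saw_add_of_nat if_True)
next
  case False
  then obtain i where "j = 2 * i + 1" by (blast elim: oddE)
  then have "x + of_nat j / 2 = (x + 1/2) + of_nat i" by simp
  with False show ?thesis by (simp only: saw_add_of_nat saw_add_saw_add_half if_False)
qed

lemma parity_sign_floor_eq_saw:
  assumes "x \<notin> \<int>"
  shows "(if even \<lfloor>x\<rfloor> then 1 else -1) = 2 * saw x - 4 * saw (x / 2)"
proof -
  define m where "m = \<lfloor>x\<rfloor>"
  have "of_int m \<noteq> x"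
    using assms by auto
  then have x: "of_int m < x" "x < of_int m + 1"
    unfolding m_def by linarith+
  obtain p where "m = 2 * p \<or> m = 2 * p + 1"
    by (metis evenE oddE)
  then show ?thesis
    using x by (auto simp: m_def [symmetric] saw_eq[of m x] saw_eq[of p "x/2"])
qed

lemma sum_Icc_int_reflect:
  fixes f :: "int \<Rightarrow> 'a::comm_monoid_add"
  shows "sum f {1..k-1} = (\<Sum>j\<in>{1..k-1}. f (k - j))"
  by (rule sum.reindex_bij_witness[of _ "\<lambda>j. k - j" "\<lambda>j. k - j"]) auto

lemma sum_Icc_int_eq_sum_lessThan:
  fixes f :: "int \<Rightarrow> 'a::comm_monoid_add"
  assumes "f 0 = 0"
  shows "sum f {1..int n - 1} = (\<Sum>j<n. f (int j))"
proof -
  have "{1..int n - 1} = int ` {1..<n}"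
  proof
    show "{1..int n - 1} \<subseteq> int ` {1..<n}"
    proof
      fix x assume "x \<in> {1..int n - 1}"
      then have "x = int (nat x)" "nat x \<in> {1..<n}" by auto
      then show "x \<in> int ` {1..<n}" by blast
    qed
  qed auto
  then have "sum f {1..int n - 1} = (\<Sum>j\<in>{1..<n}. f (int j))"
    by (simp add: sum.reindex)
  also have "\<dots> = (\<Sum>j<n. f (int j))"
    using sum_shift_lb_Suc0_0_upt[of "\<lambda>j. f (int j)" n] assms by (simp add: atLeast0LessThan)
  finally show ?thesis .
qed

lemma sum_lessThan_double:
  fixes f :: "nat \<Rightarrow> 'a::comm_monoid_add"
  shows "(\<Sum>j<2 * n. f j) = (\<Sum>j<n. f j + f (j + n))"
proof -
  have "(\<Sum>j<n + m. f j) = (\<Sum>j<n. f j) + (\<Sum>j<m. f (j + n))" for m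
    by (induction m) (auto simp: add_ac)
  from this[of n] show ?thesis
    by (simp only: mult_2 sum.distrib)
qed

lemma sum_saw_multiples_eq_0:
  "(\<Sum>j\<in>{1..k-1}. saw (of_int (a * j) / of_int k)) = 0"
proof -
  have "saw (of_int (a * (k - j)) / of_int k) = - saw (of_int (a * j) / of_int k)"
    if "j \<in> {1..k-1}" for j
  proof -
    have "of_int (a * (k - j)) / of_int k = - (of_int (a * j) / of_int k) + (of_int a :: real)"
      using that by (simp add: field_simps)
    then show ?thesis
      by (metis saw_add_of_int saw_minus)
  qed
  then have "(\<Sum>j\<in>{1..k-1}. saw (of_int (a * j) / of_int k))
      = - (\<Sum>j\<in>{1..k-1}. saw (of_int (a * j) / of_int k))"
    by (subst sum_Icc_int_reflect) (simp add: sum_negf)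
  then show ?thesis
    by simp
qed

definition dedekind_sum_nat :: "int \<Rightarrow> nat \<Rightarrow> real" where
  "dedekind_sum_nat a n = (\<Sum>j<n. saw (of_int a * real j / real n) * saw (real j / real n))"

lemma dedekind_sum_int_of_nat: "dedekind_sum a (int n) = dedekind_sum_nat a n"
  unfolding dedekind_sum_def dedekind_sum_nat_def
  by (subst sum_Icc_int_eq_sum_lessThan) (simp_all add: saw_Ints)

lemma sum_saw_multiples_lessThan_eq_0:
  "(\<Sum>j<n. saw (of_int a * real j / real n)) = 0"
  using sum_saw_multiples_eq_0[of a "int n"]
  by (subst (asm) sum_Icc_int_eq_sum_lessThan) (simp_all add: saw_Ints)

lemma dedekind_sum_nat_eq_weighted_sum:
  "dedekind_sum_nat a n = (\<Sum>j<n. real j / real n * saw (of_int a * real j / real n))"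
proof -
  have "saw (real j / real n) = real j / real n - 1/2" if "0 < j" "j < n" for j
    using that by (subst saw_eq[of 0]) auto
  then have "saw (real j / real n) * saw (of_int a * real j / real n)
      = (real j / real n - 1/2) * saw (of_int a * real j / real n)" if "j < n" for j
    using that by (cases "j = 0") (simp_all add: saw_Ints)
  then have "dedekind_sum_nat a n
      = (\<Sum>j<n. (real j / real n - 1/2) * saw (of_int a * real j / real n))"
    unfolding dedekind_sum_nat_def by (intro sum.cong) (simp_all add: mult.commute)
  also have "\<dots> = (\<Sum>j<n. real j / real n * saw (of_int a * real j / real n))
      - (\<Sum>j<n. saw (of_int a * real j / real n)) / 2"
    by (simp add: left_diff_distrib sum_subtractf sum_divide_distrib)
  finally show ?thesis
    by (simp add: sum_saw_multiples_lessThan_eq_0)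
qed

lemma dedekind_sum_nat_add_modulus: "dedekind_sum_nat (a + int n) n = dedekind_sum_nat a n"
  unfolding dedekind_sum_nat_def
proof (intro sum.cong refl)
  fix j assume "j \<in> {..<n}"
  then have "of_int (a + int n) * real j / real n = of_int a * real j / real n + of_nat j"
    by (simp add: field_simps)
  then show "saw (of_int (a + int n) * real j / real n) * saw (real j / real n)
      = saw (of_int a * real j / real n) * saw (real j / real n)"
    by (simp only: saw_add_of_nat)
qed

lemma sum_saw_half_periodic:
  fixes f :: "nat \<Rightarrow> real"
  assumes "\<And>j. f (j + n) = f j"
  shows "(\<Sum>j<2 * n. saw (real j / (2 * real n)) * f j) = (\<Sum>j<n. saw (real j / real n) * f j)"
proof -
  have "saw (real j / (2 * real n)) * f j + saw (real (j + n) / (2 * real n)) * f (j + n)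
      = saw (real j / real n) * f j" if "j < n" for j
  proof -
    have "real (j + n) / (2 * real n) = real j / (2 * real n) + 1/2"
      using that by (simp add: field_simps)
    moreover have "2 * (real j / (2 * real n)) = real j / real n"
      by simp
    ultimately show ?thesis
      using saw_add_saw_add_half[of "real j / (2 * real n)"] by (simp add: assms flip: distrib_right)
  qed
  then show ?thesis
    unfolding sum_lessThan_double by (intro sum.cong) simp_all
qed

lemma sum_saw_odd_multiples_half:
  assumes "odd a"
  shows "(\<Sum>j<n. saw (of_int a * real j / (2 * real n)))
    = dedekind_sum_nat a n - 2 * dedekind_sum_nat a (2 * n)"
proof -
  obtain q where q: "a = 2 * q + 1"
    using assms by (blast elim: oddE)
  define g where "g j = saw (of_int a * real j / (2 * real n))" for j
  define t where "t j = g j * saw (real j / (2 * real n))" for j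
  have "t j + t (j + n) = real j / (2 * real n) * saw (of_int a * real j / real n) - g j / 2"
    if "j < n" for j
  proof (cases "j = 0")
    case True
    have "of_int a * real n / (2 * real n) = of_int q + 1/2"
      using that q by (simp add: field_simps)
    then show ?thesis
      using True by (simp add: t_def g_def saw_Ints saw_of_int_add_half)
  next
    case False
    have "of_int a * real (j + n) / (2 * real n) = (of_int a * real j / (2 * real n) + 1/2) + of_int q"
      using that q by (simp add: field_simps)
    then have shift: "g (j + n) = saw (of_int a * real j / real n) - g j"
      using saw_add_saw_add_half[of "of_int a * real j / (2 * real n)"]
      by (simp add: g_def saw_add_of_int)
    have low: "saw (real j / (2 * real n)) = real j / (2 * real n) - 1/2"
      using False that by (subst saw_eq[of 0]) auto
    have high: "saw (real (j + n) / (2 * real n)) = real j / (2 * real n)"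
      using False that by (subst saw_eq[of 0]) (auto simp: field_simps)
    show ?thesis
      unfolding t_def shift low high by (simp add: algebra_simps)
  qed
  then have "dedekind_sum_nat a (2 * n)
      = (\<Sum>j<n. real j / (2 * real n) * saw (of_int a * real j / real n) - g j / 2)"
    unfolding dedekind_sum_nat_def sum_lessThan_double by (intro sum.cong) (simp_all add: t_def g_def)
  also have "\<dots> = dedekind_sum_nat a n / 2 - (\<Sum>j<n. g j) / 2"
    by (simp add: dedekind_sum_nat_eq_weighted_sum sum_subtractf sum_divide_distrib mult.commute)
  finally show ?thesis
    by (simp add: g_def)
qed

lemma dedekind_sum_nat_double_modulus:
  "dedekind_sum_nat a (2 * n) + dedekind_sum_nat (a + int n) (2 * n)
    = 3 * dedekind_sum_nat a n - dedekind_sum_nat (2 * a) n"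
proof -
  define S where "S j = saw (real j / (2 * real n))" for j
  define T where "T j = S j * saw (of_int a * real j / real n)" for j
  have "dedekind_sum_nat a (2 * n) + dedekind_sum_nat (a + int n) (2 * n)
      = (\<Sum>j<2 * n. if even j then 2 * S j * saw (of_int a * real j / (2 * real n)) else T j)"
    unfolding dedekind_sum_nat_def sum.distrib[symmetric]
  proof (intro sum.cong refl)
    fix j assume "j \<in> {..<2 * n}"
    then have "of_int (a + int n) * real j / real (2 * n) = of_int a * real j / (2 * real n) + of_nat j / 2"
      by (simp add: field_simps)
    moreover have "2 * (of_int a * real j / (2 * real n)) = of_int a * real j / real n"
      by simp
    ultimately show "saw (of_int a * real j / real (2 * n)) * saw (real j / real (2 * n))
        + saw (of_int (a + int n) * real j / real (2 * n)) * saw (real j / real (2 * n))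
        = (if even j then 2 * S j * saw (of_int a * real j / (2 * real n)) else T j)"
      using saw_add_half_of_nat[of "of_int a * real j / (2 * real n)" j]
      by (simp add: S_def T_def flip: distrib_right)
  qed
  also have "\<dots> = 2 * dedekind_sum_nat a n + (\<Sum>i<n. T (2 * i + 1))"
    unfolding sum_split_even_odd by (simp add: dedekind_sum_nat_def S_def sum_distrib_left mult_ac)
  also have "(\<Sum>i<n. T (2 * i + 1)) = dedekind_sum_nat a n - dedekind_sum_nat (2 * a) n"
  proof -
    have "(\<Sum>j<2 * n. T j) = dedekind_sum_nat a n"
      unfolding T_def S_def dedekind_sum_nat_def
    proof (subst sum_saw_half_periodic)
      show "saw (of_int a * real (j + n) / real n) = saw (of_int a * real j / real n)" for j
        using saw_add_of_int[of "of_int a * real j / real n" a] by (cases "n = 0") (simp_all add: field_simps)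
    qed (simp add: mult.commute)
    moreover have "(\<Sum>j<2 * n. T j) = (\<Sum>i<n. T (2 * i)) + (\<Sum>i<n. T (2 * i + 1))"
      using sum_split_even_odd[of T T n] by simp
    moreover have "(\<Sum>i<n. T (2 * i)) = dedekind_sum_nat (2 * a) n"
      by (simp add: T_def S_def dedekind_sum_nat_def mult_ac)
    ultimately show ?thesis
      by simp
  qed
  finally show ?thesis
    by simp
qed

lemma coprime_not_dvd_mult:
  fixes a k j :: int
  assumes "coprime a k" "0 < j" "j < k"
  shows "\<not> k dvd a * j"
proof
  assume "k dvd a * j"
  then have "k dvd j"
    using assms(1) by (simp add: coprime_commute coprime_dvd_mult_right_iff)
  then show False
    using assms(2,3) zdvd_imp_le by fastforce
qed

lemma B1_reflection:
  fixes h k :: int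
  assumes "k > 0" "coprime h k" "odd (h + k)"
  shows "2 * B1 h k = (h - 1) * (\<Sum>j\<in>{1..k-1}. if even ((h + k) * j div k) then 1 else -1)"
proof -
  define e where "e j = h * j div k" for j
  define \<sigma> where "\<sigma> j = (if even (j + e j) then 1 else -1 :: int)" for j
  have B1: "B1 h k = (\<Sum>j\<in>{1..k-1}. \<sigma> j * e j)"
    unfolding B1_def \<sigma>_def e_def Let_def floor_divide_of_int_eq ..
  have reflect: "e (k - j) = h - 1 - e j \<and> \<sigma> (k - j) = \<sigma> j" if "j \<in> {1..k-1}" for j
  proof -
    have "\<not> k dvd h * j"
      using coprime_not_dvd_mult[OF assms(2)] that by auto
    have "e (k - j) = (- (h * j) + h * k) div k"
      by (simp add: e_def algebra_simps)
    also have "\<dots> = h + - (h * j) div k"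
      using assms(1) by (subst div_mult_self1) simp_all
    also have "\<dots> = h - 1 - e j"
      using \<open>\<not> k dvd h * j\<close> assms(1) by (simp add: e_def zdiv_zminus1_eq_if flip: dvd_eq_mod_eq_0)
    finally have "e (k - j) = h - 1 - e j" .
    moreover from this have "(k - j) + e (k - j) = (h + k - 1) - (j + e j)"
      by simp
    moreover have "even (h + k - 1)"
      using assms(3) by simp
    ultimately show ?thesis
      unfolding \<sigma>_def by (metis even_add even_diff)
  qed
  have "B1 h k = (\<Sum>j\<in>{1..k-1}. \<sigma> (k - j) * e (k - j))"
    unfolding B1 by (rule sum_Icc_int_reflect)
  also have "\<dots> = (\<Sum>j\<in>{1..k-1}. (h - 1) * \<sigma> j - \<sigma> j * e j)"
    by (rule sum.cong) (auto simp: reflect algebra_simps)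
  also have "\<dots> = (h - 1) * (\<Sum>j\<in>{1..k-1}. \<sigma> j) - B1 h k"
    by (simp add: B1 sum_subtractf sum_distrib_left)
  finally have "2 * B1 h k = (h - 1) * (\<Sum>j\<in>{1..k-1}. \<sigma> j)"
    by simp
  moreover have "(h + k) * j div k = j + e j" for j
    using assms(1) by (simp add: e_def distrib_right)
  ultimately show ?thesis
    by (simp add: \<sigma>_def)
qed

lemma sum_parity_sign_div_eq_saw:
  fixes a k :: int
  assumes "coprime a k"
  shows "real_of_int (\<Sum>j\<in>{1..k-1}. if even (a * j div k) then 1 else -1)
    = -4 * (\<Sum>j\<in>{1..k-1}. saw (of_int (a * j) / of_int (2 * k)))"
proof -
  have "real_of_int (if even (a * j div k) then 1 else -1)
      = 2 * saw (of_int (a * j) / of_int k) - 4 * saw (of_int (a * j) / of_int (2 * k))"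
    if "j \<in> {1..k-1}" for j
  proof -
    define x where "x = of_int (a * j) / (of_int k :: real)"
    have "\<not> k dvd a * j" "k \<noteq> 0"
      using coprime_not_dvd_mult[OF assms] that by auto
    then have "x \<notin> \<int>"
      unfolding x_def by (simp only: of_int_div_of_int_in_Ints_iff) simp
    moreover have "x / 2 = of_int (a * j) / of_int (2 * k)"
      by (simp add: x_def)
    moreover have "\<lfloor>x\<rfloor> = a * j div k"
      unfolding x_def by (rule floor_divide_of_int_eq)
    ultimately have "(if even (a * j div k) then 1 else -1)
        = 2 * saw x - 4 * saw (of_int (a * j) / of_int (2 * k))"
      using parity_sign_floor_eq_saw by metis
    then show ?thesis
      by (simp add: x_def split: if_splits)
  qed
  then have "real_of_int (\<Sum>j\<in>{1..k-1}. if even (a * j div k) then 1 else -1)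
      = 2 * (\<Sum>j\<in>{1..k-1}. saw (of_int (a * j) / of_int k))
        - 4 * (\<Sum>j\<in>{1..k-1}. saw (of_int (a * j) / of_int (2 * k)))"
    by (simp add: sum_subtractf sum_distrib_left del: of_int_mult)
  then show ?thesis
    using sum_saw_multiples_eq_0[of a k] by simp
qed

theorem theorem18:
  fixes h k :: int
  assumes "k > 0" and "gcd h k = 1" and "odd (h + k)"
  shows "real_of_int (B1 h k) =
           (1 - real_of_int h) * (4 * dedekind_sum h (2*k) + 4 * dedekind_sum (2*h) k
                                  - 10 * dedekind_sum h k)"
proof -
  obtain n where k: "k = int n"
    using assms(1) by (metis pos_int_cases)
  have coprime: "coprime h k" "coprime (h + k) k"
    using assms(2) by (simp_all add: coprime_iff_gcd_eq_1)
  have "2 * real_of_int (B1 h k)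
      = (real_of_int h - 1) * real_of_int (\<Sum>j\<in>{1..k-1}. if even ((h + k) * j div k) then 1 else -1)"
    using arg_cong[OF B1_reflection[OF assms(1) coprime(1) assms(3)], of real_of_int] by simp
  also have "real_of_int (\<Sum>j\<in>{1..k-1}. if even ((h + k) * j div k) then 1 else -1)
      = -4 * (\<Sum>j\<in>{1..k-1}. saw (of_int ((h + k) * j) / of_int (2 * k)))"
    using coprime(2) by (rule sum_parity_sign_div_eq_saw)
  also have "(\<Sum>j\<in>{1..k-1}. saw (of_int ((h + k) * j) / of_int (2 * k)))
      = (\<Sum>j<n. saw (of_int (h + k) * real j / (2 * real n)))"
    unfolding k by (subst sum_Icc_int_eq_sum_lessThan) (simp_all add: saw_Ints)
  also have "(\<Sum>j<n. saw (of_int (h + k) * real j / (2 * real n)))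
      = dedekind_sum_nat (h + k) n - 2 * dedekind_sum_nat (h + k) (2 * n)"
    using assms(3) by (rule sum_saw_odd_multiples_half)
  also have "dedekind_sum_nat (h + k) n - 2 * dedekind_sum_nat (h + k) (2 * n)
      = 2 * dedekind_sum h (2 * k) + 2 * dedekind_sum (2 * h) k - 5 * dedekind_sum h k"
    using dedekind_sum_nat_double_modulus[of h n] dedekind_sum_nat_add_modulus[of h n]
      dedekind_sum_int_of_nat[of h "2 * n"]
    by (simp add: k dedekind_sum_int_of_nat)
  finally show ?thesis
    by (simp add: algebra_simps)
qed

end
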